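(* Let $\gamma:[0,1]\to\mathbb{R}^2$ be a $C^1$ curve of constant speed $c>0$ with $\gamma(0)\neq\gamma(1)$, whose turning angle function $\theta$ satisfies $\theta(1)-\theta(0)=2\pi m$ with $0\neq m\in\mathbb{Z}$. Let $k\ge 4$ and $\sigma\in S_k$. Then there exist cuts $C\in\partial D_k$ such that $r_{\sigma,C}$ is a closed $C^1$ curve if and only if $\sigma\in S_k\setminus Z_k$.
   Context: A turning angle function is a continuous $\theta$ with $\gamma'(s)=c(\cos\theta(s),\sin\theta(s))$. Concatenation $\alpha*\beta$ of two $C^1$ planar curves of the same constant speed ($\alpha$ on $[a_1,b_1]$, $\beta$ on $[a_2,b_2]$) is the curve equal to $\alpha(s+a_1)$ for $s\le b_1-a_1$ and to $T(\beta(s-(b_1-a_1)+a_2))$ afterwards, where $T$ is the orientation-preserving rigid motion sending $\beta(a_2)$ to $\alpha(b_1)$ and the unit tangent of $\beta$ at $a_2$ to that of $\alpha$ at $b_1$; it is associative. Let $D_k=\{(c_1,\dots,c_{k-1})\in[0,1]^{k-1}: 0\le c_1\le\dots\le c_{k-1}\le 1\}$, with topological boundary $\partial D_k$ in $\mathbb{R}^{k-1}$; set $c_0=0$, $c_k=1$. For $C\in D_k$ let $\gamma_i$ be the restriction of $\gamma$ to $[c_{i-1},c_i]$ (a degenerate arc is a point carrying the tangent direction of $\gamma$ there). For $\sigma\in S_k$, $r_{\sigma,C}:=\gamma_{\sigma(1)}*\dots*\gamma_{\sigma(k)}$ over $[0,1]$. Closed $C^1$ means the end point equals the start point and the tangents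 there agree. $Z_k=\{z_0,\dots,z_{k-1}\}$ with $z_h(i)=i+h$ if $i\le k-h$ and $z_h(i)=i+h-k$ if $i>k-h$. *)

theory Defs
  imports "HOL-Analysis.Analysis"
begin

text \<open>The plane R^2 is identified with the complex numbers. A (piece of) curve is
  represented by its parametrisation, its parameter interval [lo, hi], and the unit
  tangent vectors at its start and end point (so that degenerate arcs, i.e. points,
  still carry a tangent direction).\<close>

record pcurve =
  fn :: "real \<Rightarrow> complex"
  lo :: real
  hi :: real
  tstart :: complex
  tend :: complex

text \<open>Concatenation alpha * beta: alpha(s + a1) for s \<le> b1 - a1, and T(beta(s - (b1 - a1) + a2))
  afterwards, where T is the orientation preserving rigid motion z \<mapsto> alpha(b1) + rot (z - beta(a2))
  with rot the unit complex number rotating the start tangent of beta to the end tangent of alpha.\<close>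

definition concat :: "pcurve \<Rightarrow> pcurve \<Rightarrow> pcurve" where
  "concat \<alpha> \<beta> =
    (let L1 = hi \<alpha> - lo \<alpha>; L2 = hi \<beta> - lo \<beta>;
         rot = tend \<alpha> / tstart \<beta>;
         T = (\<lambda>z. fn \<alpha> (hi \<alpha>) + rot * (z - fn \<beta> (lo \<beta>)))
     in \<lparr>fn = (\<lambda>s. if s \<le> L1 then fn \<alpha> (s + lo \<alpha>) else T (fn \<beta> (s - L1 + lo \<beta>))),
         lo = 0, hi = L1 + L2, tstart = tstart \<alpha>, tend = rot * tend \<beta>\<rparr>)"

definition utan :: "(real \<Rightarrow> complex) \<Rightarrow> real \<Rightarrow> complex" where
  "utan \<gamma> s = sgn (vector_derivative \<gamma> (at s within {0..1}))"

definition cutpt :: "nat \<Rightarrow> (nat \<Rightarrow> real) \<Rightarrow> nat \<Rightarrow> real" where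
  "cutpt k C i = (if i = 0 then 0 else if i = k then 1 else C i)"

text \<open>D_k as a subset of R^{k-1} = (extensional functions on {1..k-1}).\<close>
definition Dk :: "nat \<Rightarrow> (nat \<Rightarrow> real) set" where
  "Dk k = {C \<in> PiE {1..k-1} (\<lambda>_. UNIV). \<forall>i\<in>{1..k}. cutpt k C (i - 1) \<le> cutpt k C i}"

definition Dk_boundary :: "nat \<Rightarrow> (nat \<Rightarrow> real) set" where
  "Dk_boundary k = (product_topology (\<lambda>_. euclideanreal) {1..k-1}) frontier_of (Dk k)"

definition arc :: "(real \<Rightarrow> complex) \<Rightarrow> nat \<Rightarrow> (nat \<Rightarrow> real) \<Rightarrow> nat \<Rightarrow> pcurve" where
  "arc \<gamma> k C i = \<lparr>fn = \<gamma>, lo = cutpt k C (i - 1), hi = cutpt k C i,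
                    tstart = utan \<gamma> (cutpt k C (i - 1)), tend = utan \<gamma> (cutpt k C i)\<rparr>"

text \<open>r_{sigma,C} = gamma_{sigma(1)} * ... * gamma_{sigma(k)} (left-associated; concatenation is associative).\<close>
definition rcurve :: "(real \<Rightarrow> complex) \<Rightarrow> nat \<Rightarrow> (nat \<Rightarrow> nat) \<Rightarrow> (nat \<Rightarrow> real) \<Rightarrow> pcurve" where
  "rcurve \<gamma> k \<sigma> C = foldl concat (arc \<gamma> k C (\<sigma> 1)) (map (\<lambda>j. arc \<gamma> k C (\<sigma> j)) [2..<k+1])"

definition closed_C1 :: "pcurve \<Rightarrow> bool" where
  "closed_C1 r \<longleftrightarrow> fn r (lo r) = fn r (hi r) \<and> tstart r = tend r"

definition zshift :: "nat \<Rightarrow> nat \<Rightarrow> nat \<Rightarrow> nat" where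
  "zshift k h i = (if i \<in> {1..k} then (if i \<le> k - h then i + h else i + h - k) else i)"

definition Zk :: "nat \<Rightarrow> (nat \<Rightarrow> nat) set" where
  "Zk k = {zshift k h | h. h < k}"

end

(*
  Record every arc by the rigid motion carrying its start frame (point and unit tangent) to its
  end frame, written in the coordinates of the start frame: concatenation composes these motions,
  and r is closed C^1 iff its motion is the identity. With F_s z = gamma s + cis (theta s) * z the
  frame of gamma at s, the arc over [s, t] has motion F_s^-1 F_t.

  For a cyclic shift the product telescopes to F_c^-1 F_1 F_0^-1 F_c, a conjugate of a translation
  by gamma 1 - gamma 0 (the rotations cancel because theta 1 - theta 0 is a multiple of 2 pi), so it
  is never the identity. If sigma is not a cyclic shift, it sends some increasing triple of
  positions to a triple in non-cyclic order; we keep only three non-degenerate arcs, over [0, a],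
  [a, b] and [b, 1] (a boundary point of D_k because k >= 4). Closedness then amounts to the
  vanishing of an explicit continuous function on the triangle 0 <= a <= b <= 1, which is constant
  on two sides and winds m /= 0 times along the diagonal, and so has a zero.
*)

theory Submission
  imports Defs
begin

definition motion :: "pcurve \<Rightarrow> complex \<Rightarrow> complex" where
  "motion a z = (fn a (hi a) - fn a (lo a) + tend a * z) / tstart a"

lemma motion_concat:
  assumes "lo a \<le> hi a" "lo b \<le> hi b"
  shows "motion (concat a b) = motion a \<circ> motion b"
proof -
  have "fn (concat a b) (lo (concat a b)) = fn a (lo a)"
    using assms by (simp add: concat_def Let_def)
  moreover have "fn (concat a b) (hi (concat a b))
      = fn a (hi a) + tend a / tstart b * (fn b (hi b) - fn b (lo b))"
  proof (cases "hi b = lo b")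
    case True
    then show ?thesis by (simp add: concat_def Let_def)
  next
    case False
    then show ?thesis using assms by (simp add: concat_def Let_def)
  qed
  moreover have "tstart (concat a b) = tstart a" "tend (concat a b) = tend a / tstart b * tend b"
    by (simp_all add: concat_def Let_def)
  ultimately show ?thesis
    by (intro ext) (simp only: motion_def o_apply, simp add: divide_inverse algebra_simps)
qed

lemma lo_le_hi_concat:
  "lo a \<le> hi a \<Longrightarrow> lo b \<le> hi b \<Longrightarrow> lo (concat a b) \<le> hi (concat a b)"
  by (simp add: concat_def Let_def)

lemma tstart_foldl_concat: "tstart (foldl concat a xs) = tstart a"
  by (induction xs arbitrary: a) (simp_all add: concat_def Let_def)

lemma motion_foldl_concat:
  "\<forall>x\<in>set (a # xs). lo x \<le> hi x \<Longrightarrow>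
    motion (foldl concat a xs) = foldr (\<circ>) (map motion (a # xs)) id"
proof (induction xs arbitrary: a)
  case (Cons x xs)
  then show ?case by (simp add: motion_concat lo_le_hi_concat)
qed simp

lemma closed_C1_iff_motion_eq_id:
  assumes "tstart r \<noteq> 0"
  shows "closed_C1 r \<longleftrightarrow> motion r = id"
proof
  assume "motion r = id"
  then have "motion r 0 = 0" "motion r 1 = 1" by simp_all
  with assms show "closed_C1 r" by (simp add: motion_def closed_C1_def field_simps)
qed (use assms in \<open>auto simp: motion_def closed_C1_def\<close>)

text \<open>With the moving frame F s z = \<gamma> s + u s * z, this is (F s)\<inverse> \<circ> F t, the motion of the arc
  over [s, t].\<close>

definition frame_change ::
  "(real \<Rightarrow> complex) \<Rightarrow> (real \<Rightarrow> complex) \<Rightarrow> real \<Rightarrow> real \<Rightarrow> complex \<Rightarrow> complex" where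
  "frame_change \<gamma> u s t z = (\<gamma> t - \<gamma> s + u t * z) / u s"

lemma frame_change_same: "u s \<noteq> 0 \<Longrightarrow> frame_change \<gamma> u s s = id"
  by (auto simp: frame_change_def)

lemma frame_change_trans:
  "u t \<noteq> 0 \<Longrightarrow> frame_change \<gamma> u s t \<circ> frame_change \<gamma> u t r = frame_change \<gamma> u s r"
  by (rule ext) (simp add: frame_change_def divide_inverse algebra_simps)

lemma inj_frame_change: "u s \<noteq> 0 \<Longrightarrow> u t \<noteq> 0 \<Longrightarrow> inj (frame_change \<gamma> u s t)"
  by (rule injI) (simp add: frame_change_def)

lemma frame_change_telescope:
  assumes "\<And>t. u t \<noteq> 0" "p \<le> q"
  shows "foldr (\<circ>) (map (\<lambda>i. frame_change \<gamma> u (x (i - 1)) (x i)) [Suc p..<Suc q]) id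
    = frame_change \<gamma> u (x p) (x q)"
  using \<open>p \<le> q\<close>
proof (induction p rule: inc_induct)
  case base
  show ?case by (simp add: frame_change_same assms(1))
next
  case (step p)
  let ?f = "\<lambda>i. frame_change \<gamma> u (x (i - 1)) (x i)"
  have "[Suc p..<Suc q] = Suc p # [Suc (Suc p)..<Suc q]"
    using step.hyps by (simp add: upt_conv_Cons)
  then have "foldr (\<circ>) (map ?f [Suc p..<Suc q]) id
      = frame_change \<gamma> u (x p) (x (Suc p)) \<circ> foldr (\<circ>) (map ?f [Suc (Suc p)..<Suc q]) id"
    by (simp del: upt_Suc)
  also have "\<dots> = frame_change \<gamma> u (x p) (x (Suc p)) \<circ> frame_change \<gamma> u (x (Suc p)) (x q)"
    by (simp only: step.IH)
  also have "\<dots> = frame_change \<gamma> u (x p) (x q)"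
    by (rule frame_change_trans) (rule assms(1))
  finally show ?case .
qed

lemma frame_change_through_ends_ne_id:
  assumes "u 1 = u 0" "u 0 \<noteq> 0" "u s \<noteq> 0" "\<gamma> 0 \<noteq> \<gamma> 1"
  shows "frame_change \<gamma> u s 1 \<circ> frame_change \<gamma> u 0 s \<noteq> id"
proof
  assume "frame_change \<gamma> u s 1 \<circ> frame_change \<gamma> u 0 s = id"
  then have "frame_change \<gamma> u s 1 (frame_change \<gamma> u 0 s 0) = 0" by (metis id_apply o_apply)
  then show False using assms by (simp add: frame_change_def field_simps)
qed

lemma frame_change_triangle_eq_id:
  assumes "u 1 = u 0" "u 0 \<noteq> 0" "u a \<noteq> 0" "u b \<noteq> 0"
    and "u 0 * (\<gamma> b - \<gamma> a) + u b * (\<gamma> a - \<gamma> 0) + u a * (\<gamma> 1 - \<gamma> b) = 0"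
  shows "frame_change \<gamma> u a b \<circ> frame_change \<gamma> u 0 a \<circ> frame_change \<gamma> u b 1 = id"
proof
  fix z
  have "(frame_change \<gamma> u a b \<circ> frame_change \<gamma> u 0 a \<circ> frame_change \<gamma> u b 1) z
      = (u 0 * (\<gamma> b - \<gamma> a) + u b * (\<gamma> a - \<gamma> 0) + u a * (\<gamma> 1 - \<gamma> b)) / (u a * u 0) + z"
    using assms(1-4) by (simp add: frame_change_def field_simps)
  then show "(frame_change \<gamma> u a b \<circ> frame_change \<gamma> u 0 a \<circ> frame_change \<gamma> u b 1) z = id z"
    using assms(5) by simp
qed

lemma comp_eq_id_swap: "inj f \<Longrightarrow> f \<circ> g = id \<Longrightarrow> g \<circ> f = id"
  by (metis comp_assoc id_comp inj_iff)

lemma foldr_comp_init: "foldr (\<circ>) fs g = foldr (\<circ>) fs id \<circ> g"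
  by (induction fs) auto

lemma utan_eq_sgn:
  assumes "(\<gamma> has_vector_derivative v) (at s within {0..1})" "s \<in> {0..1}"
  shows "utan \<gamma> s = sgn v"
proof -
  have "vector_derivative \<gamma> (at s within {0..1}) = v"
    using vector_derivative_within_cbox[of 0 1 s \<gamma> v] assms by simp
  then show ?thesis by (simp add: utan_def)
qed

lemma utan_eq_cis:
  assumes "\<forall>s\<in>{0..1}. (\<gamma> has_vector_derivative \<gamma>' s) (at s within {0..1})" "c > 0"
    and "\<forall>s\<in>{0..1}. \<gamma>' s = complex_of_real c * cis (\<theta> s)"
  shows "\<forall>s\<in>{0..1}. utan \<gamma> s = cis (\<theta> s)"
proof
  fix s :: real assume "s \<in> {0..1}"
  then have "utan \<gamma> s = sgn (\<gamma>' s)"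
    using assms(1) utan_eq_sgn by blast
  with \<open>s \<in> {0..1}\<close> show "utan \<gamma> s = cis (\<theta> s)"
    using assms(2,3) by (simp add: sgn_mult sgn_of_real)
qed

lemma cis_eq_if_diff_multiple_2pi:
  assumes "x - y = 2 * pi * of_int m"
  shows "cis x = cis y"
proof -
  have "x = y + 2 * pi * of_int m"
    using assms by simp
  then have "cis x = cis y * cis (2 * pi * of_int m)"
    unfolding cis_mult by (rule arg_cong)
  then show ?thesis
    by simp
qed

lemma Dk_cutpt_mono:
  assumes "C \<in> Dk k" "i \<le> j" "j \<le> k"
  shows "cutpt k C i \<le> cutpt k C j"
  using assms(2,3)
proof (induction j rule: dec_induct)
  case (step n)
  then have "Suc n \<in> {1..k}" by simp
  then have "cutpt k C (Suc n - 1) \<le> cutpt k C (Suc n)"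
    using assms(1) unfolding Dk_def by blast
  with step show ?case by simp
qed simp

lemma Dk_cutpt_bounds:
  assumes "C \<in> Dk k" "i \<le> k"
  shows "0 \<le> cutpt k C i" "cutpt k C i \<le> 1"
  using Dk_cutpt_mono[OF assms(1), of 0 i] Dk_cutpt_mono[OF assms(1), of i k] assms(2)
  by (simp_all add: cutpt_def split: if_splits)

lemma motion_arc:
  assumes "C \<in> Dk k" "i \<in> {1..k}" "\<forall>s\<in>{0..1}. utan \<gamma> s = u s"
  shows "motion (arc \<gamma> k C i) = frame_change \<gamma> u (cutpt k C (i - 1)) (cutpt k C i)"
proof -
  have "cutpt k C (i - 1) \<in> {0..1}" "cutpt k C i \<in> {0..1}"
    using Dk_cutpt_bounds[OF assms(1)] assms(2) by auto
  with assms(3) show ?thesis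
    by (intro ext) (simp add: motion_def arc_def frame_change_def)
qed

lemma motion_rcurve:
  assumes "\<sigma> ` {1..k} \<subseteq> {1..k}" "C \<in> Dk k" "k \<ge> 1" "\<forall>s\<in>{0..1}. utan \<gamma> s = u s"
  shows "motion (rcurve \<gamma> k \<sigma> C)
    = foldr (\<circ>) (map (\<lambda>j. frame_change \<gamma> u (cutpt k C (\<sigma> j - 1)) (cutpt k C (\<sigma> j))) [1..<k+1]) id"
proof -
  have "[1..<k+1] = 1 # [2..<k+1]"
    using assms(3) upt_conv_Cons[of 1 "k+1"] by (simp add: numeral_2_eq_2)
  then have arcs: "map (\<lambda>j. arc \<gamma> k C (\<sigma> j)) [1..<k+1]
      = arc \<gamma> k C (\<sigma> 1) # map (\<lambda>j. arc \<gamma> k C (\<sigma> j)) [2..<k+1]"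
    by (simp del: upt_Suc)
  have \<sigma>_range: "\<sigma> j \<in> {1..k}" if "j \<in> set [1..<k+1]" for j
    using assms(1) that unfolding image_subset_iff by auto
  have "lo (arc \<gamma> k C i) \<le> hi (arc \<gamma> k C i)" if "i \<in> {1..k}" for i
    using Dk_cutpt_mono[OF assms(2), of "i - 1" i] that by (simp add: arc_def)
  then have "\<forall>x\<in>set (map (\<lambda>j. arc \<gamma> k C (\<sigma> j)) [1..<k+1]). lo x \<le> hi x"
    using \<sigma>_range by simp
  then have "motion (rcurve \<gamma> k \<sigma> C)
      = foldr (\<circ>) (map motion (map (\<lambda>j. arc \<gamma> k C (\<sigma> j)) [1..<k+1])) id"
    unfolding rcurve_def arcs by (rule motion_foldl_concat)
  also have "map motion (map (\<lambda>j. arc \<gamma> k C (\<sigma> j)) [1..<k+1])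
      = map (\<lambda>j. frame_change \<gamma> u (cutpt k C (\<sigma> j - 1)) (cutpt k C (\<sigma> j))) [1..<k+1]"
    unfolding map_map
    by (rule map_cong[OF refl]) (simp add: motion_arc[OF assms(2) \<sigma>_range assms(4)])
  finally show ?thesis .
qed

lemma tstart_rcurve:
  assumes "\<sigma> ` {1..k} \<subseteq> {1..k}" "C \<in> Dk k" "k \<ge> 1" "\<forall>s\<in>{0..1}. utan \<gamma> s = u s"
  shows "tstart (rcurve \<gamma> k \<sigma> C) = u (cutpt k C (\<sigma> 1 - 1))"
proof -
  have "1 \<in> {1..k}"
    using assms(3) by simp
  then have "\<sigma> 1 \<in> {1..k}"
    using assms(1) by blast
  then have "\<sigma> 1 - 1 \<le> k"
    by arith
  then have "cutpt k C (\<sigma> 1 - 1) \<in> {0..1}"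
    using Dk_cutpt_bounds[OF assms(2)] by simp
  with assms(4) show ?thesis
    by (simp add: rcurve_def tstart_foldl_concat arc_def)
qed

lemma closed_C1_rcurve_iff:
  assumes "\<sigma> ` {1..k} \<subseteq> {1..k}" "C \<in> Dk k" "k \<ge> 1"
    and "\<forall>s\<in>{0..1}. utan \<gamma> s = u s" "\<And>t. u t \<noteq> 0"
  shows "closed_C1 (rcurve \<gamma> k \<sigma> C) \<longleftrightarrow>
    foldr (\<circ>) (map (\<lambda>j. frame_change \<gamma> u (cutpt k C (\<sigma> j - 1)) (cutpt k C (\<sigma> j))) [1..<k+1]) id = id"
  using closed_C1_iff_motion_eq_id motion_rcurve[OF assms(1-4)] tstart_rcurve[OF assms(1-4)] assms(5)
  by metis

lemma map_zshift_upt: "h < k \<Longrightarrow> map (zshift k h) [1..<k+1] = [h+1..<k+1] @ [1..<h+1]"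
  by (rule nth_equalityI) (auto simp: zshift_def nth_append)

lemma rcurve_not_closed_if_Zk:
  assumes "\<sigma> \<in> Zk k" "C \<in> Dk k" "\<forall>s\<in>{0..1}. utan \<gamma> s = u s" "\<And>t. u t \<noteq> 0"
    and "u 1 = u 0" "\<gamma> 0 \<noteq> \<gamma> 1"
  shows "\<not> closed_C1 (rcurve \<gamma> k \<sigma> C)"
proof -
  obtain h where "h < k" and \<sigma>: "\<sigma> = zshift k h"
    using assms(1) by (auto simp: Zk_def)
  let ?x = "cutpt k C"
  let ?M = "\<lambda>i. frame_change \<gamma> u (?x (i - 1)) (?x i)"
  have maps: "map (\<lambda>j. ?M (\<sigma> j)) [1..<k+1] = map ?M [Suc h..<Suc k] @ map ?M [Suc 0..<Suc h]"
    using arg_cong[OF map_zshift_upt[OF \<open>h < k\<close>], of "map ?M"] \<sigma> by (simp add: comp_def del: upt_Suc)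
  have "foldr (\<circ>) (map (\<lambda>j. ?M (\<sigma> j)) [1..<k+1]) id
      = foldr (\<circ>) (map ?M [Suc h..<Suc k]) id \<circ> foldr (\<circ>) (map ?M [Suc 0..<Suc h]) id"
    by (simp only: maps foldr_append foldr_comp_init[of _ "foldr (\<circ>) _ id"])
  also have "\<dots> = frame_change \<gamma> u (?x h) (?x k) \<circ> frame_change \<gamma> u (?x 0) (?x h)"
    using \<open>h < k\<close> by (intro arg_cong2[where f = "(\<circ>)"] frame_change_telescope assms(4)) simp_all
  also have "\<dots> = frame_change \<gamma> u (?x h) 1 \<circ> frame_change \<gamma> u 0 (?x h)"
    using \<open>h < k\<close> by (simp add: cutpt_def)
  finally have "foldr (\<circ>) (map (\<lambda>j. ?M (\<sigma> j)) [1..<k+1]) id \<noteq> id"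
    using frame_change_through_ends_ne_id assms(4-6) by metis
  moreover have "\<sigma> ` {1..k} \<subseteq> {1..k}"
    using \<open>h < k\<close> by (auto simp: \<sigma> zshift_def)
  ultimately show ?thesis
    using closed_C1_rcurve_iff[OF _ assms(2) _ assms(3,4)] \<open>h < k\<close> by simp
qed

definition cyclically_ordered :: "nat \<Rightarrow> nat \<Rightarrow> nat \<Rightarrow> bool" where
  "cyclically_ordered a b c \<longleftrightarrow> (a < b \<and> b < c) \<or> (b < c \<and> c < a) \<or> (c < a \<and> a < b)"

lemma cyclically_ordered_rotate: "cyclically_ordered b c a \<longleftrightarrow> cyclically_ordered a b c"
  by (auto simp: cyclically_ordered_def)

definition cyclic_order_preserving :: "(nat \<Rightarrow> nat) \<Rightarrow> nat \<Rightarrow> bool" where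
  "cyclic_order_preserving \<sigma> k \<longleftrightarrow> (\<forall>j1 j2 j3. 1 \<le> j1 \<longrightarrow> j1 < j2 \<longrightarrow> j2 < j3 \<longrightarrow> j3 \<le> k \<longrightarrow>
    cyclically_ordered (\<sigma> j1) (\<sigma> j2) (\<sigma> j3))"

lemma cyclic_order_preserving_consecutive:
  assumes \<sigma>: "\<sigma> permutes {1..k}" and "cyclic_order_preserving \<sigma> k"
    and j: "1 \<le> j" "j < k" and z: "z \<in> {1..k}" "z \<noteq> \<sigma> j" "z \<noteq> \<sigma> (Suc j)"
  shows "cyclically_ordered (\<sigma> j) (\<sigma> (Suc j)) z"
proof -
  obtain i where i: "i \<in> {1..k}" "\<sigma> i = z"
    using permutes_image[OF \<sigma>] z(1) by (metis imageE)
  have cyclic: "cyclically_ordered (\<sigma> j1) (\<sigma> j2) (\<sigma> j3)"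
    if "1 \<le> j1" "j1 < j2" "j2 < j3" "j3 \<le> k" for j1 j2 j3
    using assms(2) that unfolding cyclic_order_preserving_def by blast
  have "i < j \<or> Suc j < i"
    using z i by (cases "i = j \<or> i = Suc j") auto
  then show ?thesis
  proof
    assume "i < j"
    then show ?thesis
      using cyclic[of i j "Suc j"] i j by (simp add: cyclically_ordered_rotate)
  next
    assume "Suc j < i"
    then show ?thesis
      using cyclic[of j "Suc j" i] i j by simp
  qed
qed

lemma cyclic_order_preserving_successor:
  assumes \<sigma>: "\<sigma> permutes {1..k}" and cyclic: "cyclic_order_preserving \<sigma> k"
    and j: "1 \<le> j" "j < k"
  shows "\<sigma> (Suc j) = (if \<sigma> j = k then 1 else Suc (\<sigma> j))"
proof -
  let ?x = "\<sigma> j" and ?y = "\<sigma> (Suc j)"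
  have "j \<in> {1..k}" "Suc j \<in> {1..k}"
    using j by auto
  then have range: "?x \<in> {1..k}" "?y \<in> {1..k}"
    by (simp_all only: permutes_in_image[OF \<sigma>])
  have "?x \<noteq> ?y"
    using permutes_inj[OF \<sigma>] by (metis injD n_not_Suc_n)
  note others = cyclic_order_preserving_consecutive[OF \<sigma> cyclic j]
  show ?thesis
  proof (cases "?x < ?y")
    case True
    have "?y = Suc ?x"
    proof (rule ccontr)
      assume "?y \<noteq> Suc ?x"
      moreover have "Suc ?x \<in> {1..k}" using True range by simp
      ultimately have "cyclically_ordered ?x ?y (Suc ?x)" by (simp add: others)
      with True show False unfolding cyclically_ordered_def by linarith
    qed
    with True range show ?thesis by simp
  next
    case False
    with \<open>?x \<noteq> ?y\<close> have "?y < ?x" by simp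
    have "?y = 1"
    proof (rule ccontr)
      assume "?y \<noteq> 1"
      moreover have "1 \<noteq> ?x" "1 \<in> {1..k}" using \<open>?y < ?x\<close> range by simp_all
      ultimately have "cyclically_ordered ?x ?y 1" by (simp add: others)
      with \<open>?y < ?x\<close> range show False unfolding cyclically_ordered_def by simp
    qed
    moreover have "?x = k"
    proof (rule ccontr)
      assume "?x \<noteq> k"
      moreover have "k \<noteq> ?y" "k \<in> {1..k}" using \<open>?y < ?x\<close> range by simp_all
      ultimately have "cyclically_ordered ?x ?y k" by (simp add: others)
      with \<open>?y < ?x\<close> range show False unfolding cyclically_ordered_def by simp
    qed
    ultimately show ?thesis by simp
  qed
qed

lemma cyclic_order_preserving_imp_Zk:
  assumes \<sigma>: "\<sigma> permutes {1..k}" and "k \<ge> 1" and cyclic: "cyclic_order_preserving \<sigma> k"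
  shows "\<sigma> \<in> Zk k"
proof -
  define h where "h = \<sigma> 1 - 1"
  have "1 \<in> {1..k}"
    using \<open>k \<ge> 1\<close> by simp
  then have "\<sigma> 1 \<in> {1..k}"
    by (simp only: permutes_in_image[OF \<sigma>])
  then have "h < k" "\<sigma> 1 = Suc h"
    by (auto simp: h_def)
  have "\<sigma> j = zshift k h j" if "1 \<le> j" "j \<le> k" for j
    using that
  proof (induction j rule: dec_induct)
    case base
    with \<open>h < k\<close> \<open>\<sigma> 1 = Suc h\<close> show ?case by (simp add: zshift_def)
  next
    case (step n)
    then have "\<sigma> n = zshift k h n" "1 \<le> n" "n < k" by auto
    with cyclic_order_preserving_successor[OF \<sigma> cyclic, of n] \<open>h < k\<close> show ?case
      by (auto simp: zshift_def)
  qed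
  moreover have "\<sigma> j = zshift k h j" if "j \<notin> {1..k}" for j
    using permutes_not_in[OF \<sigma> that] unfolding zshift_def if_not_P[OF that] .
  ultimately have "\<sigma> = zshift k h"
    by (metis atLeastAtMost_iff ext)
  with \<open>h < k\<close> show ?thesis
    by (auto simp: Zk_def)
qed

lemma continuous_map_cutpt:
  "i \<le> k \<Longrightarrow>
    continuous_map (product_topology (\<lambda>_. euclideanreal) {1..k-1}) euclideanreal (\<lambda>C. cutpt k C i)"
  by (cases "i = 0 \<or> i = k") (auto simp: cutpt_def intro: continuous_map_product_projection)

lemma closedin_Dk:
  assumes "k \<ge> 1"
  shows "closedin (product_topology (\<lambda>_. euclideanreal) {1..k-1}) (Dk k)"
proof -
  let ?X = "product_topology (\<lambda>_. euclideanreal) {1..k-1}"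
  define S where "S i = {C \<in> topspace ?X. cutpt k C i - cutpt k C (i - 1) \<in> {0..}}" for i
  have "closedin ?X (S i)" if "i \<in> {1..k}" for i
    unfolding S_def using that
    by (intro closedin_continuous_map_preimage[where Y = euclideanreal] continuous_map_diff continuous_map_cutpt)
      auto
  then have "closedin ?X (\<Inter> (S ` {1..k}))"
    using assms by (intro closedin_Inter) auto
  moreover have "\<Inter> (S ` {1..k}) = Dk k"
    using assms by (auto simp: S_def Dk_def topspace_product_topology)
  ultimately show ?thesis by simp
qed

lemma Dk_boundary_subset: "k \<ge> 1 \<Longrightarrow> Dk_boundary k \<subseteq> Dk k"
  unfolding Dk_boundary_def by (rule frontier_of_subset_closedin[OF closedin_Dk])

lemma degenerate_arc_imp_Dk_boundary:
  assumes C: "C \<in> Dk k" and "k \<ge> 2" and i: "i \<in> {1..k}"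
    and degenerate: "cutpt k C (i - 1) = cutpt k C i"
  shows "C \<in> Dk_boundary k"
proof -
  let ?X = "product_topology (\<lambda>_. euclideanreal) {1..k-1}"
  have "Dk k \<subseteq> topspace ?X"
    by (auto simp: Dk_def topspace_product_topology)
  with C have "C \<in> ?X closure_of Dk k"
    using closure_of_subset by blast
  moreover have "C \<notin> ?X interior_of Dk k"
  proof
    assume interior: "C \<in> ?X interior_of Dk k"
    \<comment> \<open>Pushing c_(k-1) up (if i = k) or c_i down (otherwise) breaks c_(i-1) \<le> c_i.\<close>
    define j where "j = (if i = k then k - 1 else i)"
    define s :: real where "s = (if i = k then 1 else -1)"
    define move where "move t = C(j := t)" for t
    have j: "j \<in> {1..k-1}"
      using i \<open>k \<ge> 2\<close> by (auto simp: j_def)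
    have "C \<in> extensional {1..k-1}"
      using C by (auto simp: Dk_def PiE_def)
    then have move_cont: "continuous_map euclideanreal ?X move"
      unfolding continuous_map_componentwise
    proof (intro conjI ballI)
      show "move ` topspace euclideanreal \<subseteq> extensional {1..k-1}"
        using \<open>C \<in> extensional {1..k-1}\<close> j by (auto simp: move_def extensional_def)
    next
      show "continuous_map euclideanreal euclideanreal (\<lambda>t. move t l)" for l
        by (cases "l = j") (simp_all add: move_def)
    qed
    have "openin euclideanreal {t \<in> topspace euclideanreal. move t \<in> ?X interior_of Dk k}"
      by (rule openin_continuous_map_preimage[OF move_cont openin_interior_of])
    then have "open {t. move t \<in> ?X interior_of Dk k}"
      by (simp only: open_openin topspace_euclidean UNIV_I simp_thms)
    moreover have "C j \<in> {t. move t \<in> ?X interior_of Dk k}"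
      using interior by (simp add: move_def)
    ultimately obtain e where "e > 0" and e: "ball (C j) e \<subseteq> {t. move t \<in> ?X interior_of Dk k}"
      by (rule openE)
    define C' where "C' = move (C j + s * e / 2)"
    have "C j + s * e / 2 \<in> ball (C j) e"
      using \<open>e > 0\<close> by (simp add: s_def dist_real_def)
    with e have "C' \<in> ?X interior_of Dk k"
      unfolding C'_def by blast
    then have "C' \<in> Dk k"
      by (rule subsetD[OF interior_of_subset])
    then have "cutpt k C' (i - 1) \<le> cutpt k C' i"
      unfolding Dk_def using i by (elim CollectE conjE) (rule bspec)
    moreover have "cutpt k C' (i - 1) = cutpt k C (i - 1) + e / 2 \<and> cutpt k C' i = cutpt k C i"
      if "i = k"
      using that \<open>k \<ge> 2\<close> by (simp add: cutpt_def C'_def move_def j_def s_def)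
    moreover have "cutpt k C' (i - 1) = cutpt k C (i - 1) \<and> cutpt k C' i = cutpt k C i - e / 2"
      if "i \<noteq> k"
      using that i by (auto simp: cutpt_def C'_def move_def j_def s_def)
    ultimately show False
      using degenerate \<open>e > 0\<close> by (cases "i = k") simp_all
  qed
  ultimately show ?thesis
    by (simp add: Dk_boundary_def frontier_of_def)
qed

definition three_cuts :: "nat \<Rightarrow> nat \<Rightarrow> nat \<Rightarrow> nat \<Rightarrow> real \<Rightarrow> real \<Rightarrow> nat \<Rightarrow> real" where
  "three_cuts k p q r a b =
    restrict (\<lambda>i. if i < p then 0 else if i < q then a else if i < r then b else 1) {1..k-1}"

lemma cutpt_three_cuts:
  assumes "1 \<le> p" "p < q" "q < r" "r \<le> k" "i \<le> k"
  shows "cutpt k (three_cuts k p q r a b) i = (if i < p then 0 else if i < q then a else if i < r then b else 1)"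
  using assms by (auto simp: cutpt_def three_cuts_def)

lemma three_cuts_in_Dk:
  assumes "1 \<le> p" "p < q" "q < r" "r \<le> k" "0 \<le> a" "a \<le> b" "b \<le> 1"
  shows "three_cuts k p q r a b \<in> Dk k"
proof -
  let ?C = "three_cuts k p q r a b"
  let ?\<phi> = "\<lambda>i. if i < p then 0 else if i < q then a else if i < r then b else 1"
  have mono: "?\<phi> m \<le> ?\<phi> n" if "m \<le> n" for m n
    using that assms by auto
  have "cutpt k ?C (i - 1) \<le> cutpt k ?C i" if "i \<in> {1..k}" for i
  proof -
    have "i - 1 \<le> k" "i \<le> k" using that by auto
    then have "cutpt k ?C (i - 1) = ?\<phi> (i - 1)" "cutpt k ?C i = ?\<phi> i"
      by (simp_all only: cutpt_three_cuts[OF assms(1-4)])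
    with mono[of "i - 1" i] show ?thesis by simp
  qed
  then show ?thesis
    by (simp add: Dk_def three_cuts_def)
qed

lemma cutpt_three_cuts_degenerate:
  assumes "1 \<le> p" "p < q" "q < r" "r \<le> k" "i \<in> {1..k}" "i \<notin> {p, q, r}"
  shows "cutpt k (three_cuts k p q r a b) (i - 1) = cutpt k (three_cuts k p q r a b) i"
proof -
  have le: "i - 1 \<le> k" "i \<le> k"
    using assms(5) by auto
  have "i - 1 < p \<longleftrightarrow> i < p" "i - 1 < q \<longleftrightarrow> i < q" "i - 1 < r \<longleftrightarrow> i < r"
    using assms(5,6) by auto
  then show ?thesis
    unfolding cutpt_three_cuts[OF assms(1-4) le(1)] cutpt_three_cuts[OF assms(1-4) le(2)] by simp
qed

lemma three_cuts_in_Dk_boundary: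
  assumes "1 \<le> p" "p < q" "q < r" "r \<le> k" "k \<ge> 4" "0 \<le> a" "a \<le> b" "b \<le> 1"
  shows "three_cuts k p q r a b \<in> Dk_boundary k"
proof -
  obtain i where i: "i \<in> {1..k}" "i \<notin> {p, q, r}"
  proof -
    have "card {p, q, r} < card {1..k}"
      using assms by (simp add: card_insert_if)
    then have "\<not> {1..k} \<subseteq> {p, q, r}"
      by (meson card_mono finite.emptyI finite.insertI leD)
    then show ?thesis using that by blast
  qed
  with assms show ?thesis
    by (intro degenerate_arc_imp_Dk_boundary[OF three_cuts_in_Dk _ _ cutpt_three_cuts_degenerate]) auto
qed

lemma constant_on_if_exp_constant:
  fixes g :: "'a::topological_space \<Rightarrow> complex"
  assumes "connected S" "continuous_on S g" "\<And>t. t \<in> S \<Longrightarrow> exp (g t) = w"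
  shows "g constant_on S"
proof (rule continuous_discrete_range_constant[OF assms(1,2)])
  fix x assume x: "x \<in> S"
  show "\<exists>e>0. \<forall>y. y \<in> S \<and> g y \<noteq> g x \<longrightarrow> e \<le> norm (g y - g x)"
  proof (intro exI[of _ 1] conjI allI impI)
    fix y assume y: "y \<in> S \<and> g y \<noteq> g x"
    then have "exp (g y) = exp (g x)"
      using assms(3) x by auto
    then obtain n :: int where n: "g y = g x + (of_int (2 * n) * pi) * \<i>"
      using exp_eq by blast
    with y have "1 \<le> \<bar>real_of_int (2 * n)\<bar>"
      by auto
    then have "1 * 1 \<le> \<bar>real_of_int (2 * n)\<bar> * pi"
      using pi_gt3 by (intro mult_mono) auto
    with n show "1 \<le> norm (g y - g x)"
      by (simp add: norm_mult)
  qed simp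
qed

lemma triangle_map_has_zero:
  fixes F :: "real \<times> real \<Rightarrow> complex" and \<theta> :: "real \<Rightarrow> real"
  defines "T \<equiv> {(a, b). 0 \<le> a \<and> a \<le> b \<and> b \<le> (1::real)}"
  assumes contF: "continuous_on T F" and cont\<theta>: "continuous_on {0..1} \<theta>"
    and left: "\<And>b. b \<in> {0..1} \<Longrightarrow> F (0, b) = w"
    and top: "\<And>a. a \<in> {0..1} \<Longrightarrow> F (a, 1) = w"
    and diagonal: "\<And>a. a \<in> {0..1} \<Longrightarrow> F (a, a) = cis (\<theta> a) * v"
    and "\<theta> 1 \<noteq> \<theta> 0"
  shows "\<exists>p\<in>T. F p = 0"
proof (rule ccontr)
  \<comment> \<open>A zero-free F has a continuous logarithm g on the contractible triangle; g is constant on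
    the two sides where F = w, but Im g changes by \<theta> 1 - \<theta> 0 along the diagonal.\<close>
  assume "\<not> (\<exists>p\<in>T. F p = 0)"
  moreover have "contractible T"
    unfolding T_def
    by (intro convex_imp_contractible)
      (auto simp: convex_def intro!: add_mono mult_left_mono convex_bound_le)
  ultimately obtain g where g: "continuous_on T g" "\<And>p. p \<in> T \<Longrightarrow> F p = exp (g p)"
    using continuous_logarithm_on_contractible[OF contF] by metis
  have cont_g_path: "continuous_on {0..1} (\<lambda>t. g (\<rho> t))"
    if "continuous_on {0..1} \<rho>" "\<rho> ` {0..1} \<subseteq> T" for \<rho>
    using continuous_on_compose2[OF g(1) that] .
  have "(\<lambda>t. g (0, t)) constant_on {0..1}"
    using left g(2) by (intro constant_on_if_exp_constant cont_g_path continuous_intros)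
      (auto simp: T_def)
  then have "g (0, 0) = g (0, 1)"
    by (auto simp: constant_on_def)
  moreover have "(\<lambda>t. g (t, 1)) constant_on {0..1}"
    using top g(2) by (intro constant_on_if_exp_constant cont_g_path continuous_intros)
      (auto simp: T_def)
  then have "g (0, 1) = g (1, 1)"
    by (auto simp: constant_on_def)
  moreover have "(\<lambda>t. g (t, t) - \<i> * of_real (\<theta> t)) constant_on {0..1}"
  proof (rule constant_on_if_exp_constant)
    show "continuous_on {0..1} (\<lambda>t. g (t, t) - \<i> * of_real (\<theta> t))"
      by (intro continuous_intros cont_g_path cont\<theta>) (auto simp: T_def)
    show "exp (g (t, t) - \<i> * of_real (\<theta> t)) = v" if "t \<in> {0..1}" for t
      using g(2)[of "(t, t)"] diagonal[OF that] that by (auto simp: T_def exp_diff cis_conv_exp field_simps)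
  qed simp
  then have "g (0, 0) - \<i> * of_real (\<theta> 0) = g (1, 1) - \<i> * of_real (\<theta> 1)"
    by (auto simp: constant_on_def)
  ultimately show False
    using \<open>\<theta> 1 \<noteq> \<theta> 0\<close> by (simp add: complex_eq_iff)
qed

lemma foldr_comp_filter:
  assumes "\<And>x. x \<in> set xs \<Longrightarrow> \<not> P x \<Longrightarrow> f x = id"
  shows "foldr (\<circ>) (map f (filter P xs)) id = foldr (\<circ>) (map f xs) id"
  using assms by (induction xs) auto

lemma filter_upt_three:
  assumes "1 \<le> j1" "j1 < j2" "j2 < j3" "j3 \<le> k"
  shows "filter (\<lambda>j. j \<in> {j1, j2, j3}) [1..<k+1] = [j1, j2, j3]"
proof (rule sorted_distinct_set_unique)
  show "sorted (filter (\<lambda>j. j \<in> {j1, j2, j3}) [1..<k+1])"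
    by (rule sorted_wrt_filter) (rule sorted_upt)
  show "distinct (filter (\<lambda>j. j \<in> {j1, j2, j3}) [1..<k+1])"
    by (rule distinct_filter) (rule distinct_upt)
  show "set (filter (\<lambda>j. j \<in> {j1, j2, j3}) [1..<k+1]) = set [j1, j2, j3]"
    using assms by (auto simp del: upt_Suc)
qed (use assms in simp_all)

lemma exists_closed_rcurve_three_arcs:
  assumes \<sigma>: "\<sigma> permutes {1..k}" and "k \<ge> 4"
    and ut: "\<forall>s\<in>{0..1}. utan \<gamma> s = u s" and u: "\<And>t. u t \<noteq> 0"
    and pqr: "1 \<le> p" "p < q" "q < r" "r \<le> k" and ab: "0 \<le> a" "a \<le> b" "b \<le> 1"
    and js: "1 \<le> j1" "j1 < j2" "j2 < j3" "j3 \<le> k" and images: "{\<sigma> j1, \<sigma> j2, \<sigma> j3} = {p, q, r}"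
  defines "M \<equiv> \<lambda>i. if i = p then frame_change \<gamma> u 0 a
    else if i = q then frame_change \<gamma> u a b else frame_change \<gamma> u b 1"
  assumes closing: "M (\<sigma> j1) \<circ> M (\<sigma> j2) \<circ> M (\<sigma> j3) = id"
  shows "\<exists>C\<in>Dk_boundary k. closed_C1 (rcurve \<gamma> k \<sigma> C)"
proof
  let ?C = "three_cuts k p q r a b"
  let ?N = "\<lambda>i. frame_change \<gamma> u (cutpt k ?C (i - 1)) (cutpt k ?C i)"
  show "?C \<in> Dk_boundary k"
    using three_cuts_in_Dk_boundary pqr ab \<open>k \<ge> 4\<close> by blast
  have N_pqr: "?N i = M i" if "i \<in> {p, q, r}" for i
  proof -
    have "i - 1 \<le> k" "i \<le> k"
      using that pqr by auto
    then show ?thesis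
      using that pqr unfolding cutpt_three_cuts[OF pqr \<open>i - 1 \<le> k\<close>] cutpt_three_cuts[OF pqr \<open>i \<le> k\<close>]
      by (auto simp: M_def)
  qed
  have N_id: "?N (\<sigma> j) = id" if "j \<in> set [1..<k+1]" "j \<notin> {j1, j2, j3}" for j
  proof -
    have "j \<in> {1..k}"
      using that(1) by auto
    then have "\<sigma> j \<in> {1..k}"
      by (simp only: permutes_in_image[OF \<sigma>])
    moreover have "\<sigma> j \<notin> {p, q, r}"
      using that(2) unfolding images[symmetric] by (simp add: inj_eq[OF permutes_inj[OF \<sigma>]])
    ultimately have "cutpt k ?C (\<sigma> j - 1) = cutpt k ?C (\<sigma> j)"
      by (rule cutpt_three_cuts_degenerate[OF pqr])
    then show ?thesis
      by (simp add: frame_change_same u)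
  qed
  have M_j: "?N (\<sigma> j1) = M (\<sigma> j1)" "?N (\<sigma> j2) = M (\<sigma> j2)" "?N (\<sigma> j3) = M (\<sigma> j3)"
    using images by (blast intro: N_pqr)+
  have "foldr (\<circ>) (map (\<lambda>j. ?N (\<sigma> j)) [1..<k+1]) id
      = foldr (\<circ>) (map (\<lambda>j. ?N (\<sigma> j)) (filter (\<lambda>j. j \<in> {j1, j2, j3}) [1..<k+1])) id"
    by (rule foldr_comp_filter[OF N_id, symmetric])
  also have "\<dots> = M (\<sigma> j1) \<circ> M (\<sigma> j2) \<circ> M (\<sigma> j3)"
    unfolding filter_upt_three[OF js] using M_j by (simp only: list.map) (simp add: o_assoc)
  also have "\<dots> = id"
    by (rule closing)
  finally have "foldr (\<circ>) (map (\<lambda>j. ?N (\<sigma> j)) [1..<k+1]) id = id" .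
  moreover have "\<sigma> ` {1..k} \<subseteq> {1..k}"
    using permutes_image[OF \<sigma>] by (rule equalityD1)
  ultimately show "closed_C1 (rcurve \<gamma> k \<sigma> ?C)"
    using closed_C1_rcurve_iff[OF _ three_cuts_in_Dk[OF pqr ab] _ ut u] pqr by simp
qed

lemma noncyclic_closing_cuts:
  fixes \<gamma> :: "real \<Rightarrow> complex" and \<theta> :: "real \<Rightarrow> real"
  defines "A a \<equiv> frame_change \<gamma> (\<lambda>s. cis (\<theta> s)) 0 a"
    and "B a b \<equiv> frame_change \<gamma> (\<lambda>s. cis (\<theta> s)) a b"
    and "C b \<equiv> frame_change \<gamma> (\<lambda>s. cis (\<theta> s)) b 1"
  assumes cont\<gamma>: "continuous_on {0..1} \<gamma>" and cont\<theta>: "continuous_on {0..1} \<theta>"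
    and "\<theta> 1 \<noteq> \<theta> 0" and cis_turn: "cis (\<theta> 1) = cis (\<theta> 0)"
  obtains a b where "0 \<le> a" "a \<le> b" "b \<le> 1"
    "B a b \<circ> A a \<circ> C b = id" "A a \<circ> C b \<circ> B a b = id" "C b \<circ> B a b \<circ> A a = id"
proof -
  let ?u = "\<lambda>s. cis (\<theta> s)"
  let ?T = "{(a, b). 0 \<le> a \<and> a \<le> b \<and> b \<le> (1::real)}"
  \<comment> \<open>F (a, b) is u a * u 0 times the translation part of B a b \<circ> A a \<circ> C b.\<close>
  define F where "F p = ?u 0 * (\<gamma> (snd p) - \<gamma> (fst p)) + ?u (snd p) * (\<gamma> (fst p) - \<gamma> 0)
    + ?u (fst p) * (\<gamma> 1 - \<gamma> (snd p))" for p
  have "fst ` ?T \<subseteq> {0..1}" "snd ` ?T \<subseteq> {0..1}"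
    by auto
  then have "continuous_on ?T F"
    unfolding F_def
    by (intro continuous_intros continuous_on_compose2[OF cont\<gamma>] continuous_on_compose2[OF cont\<theta>]) auto
  then have "\<exists>p\<in>?T. F p = 0"
    by (rule triangle_map_has_zero[OF _ cont\<theta> _ _ _ \<open>\<theta> 1 \<noteq> \<theta> 0\<close>,
          where w = "?u 0 * (\<gamma> 1 - \<gamma> 0)" and v = "\<gamma> 1 - \<gamma> 0"])
      (auto simp: F_def cis_turn algebra_simps)
  then obtain a b where ab: "0 \<le> a" "a \<le> b" "b \<le> 1" and "F (a, b) = 0"
    by auto
  have BAC: "B a b \<circ> A a \<circ> C b = id"
    unfolding A_def B_def C_def using \<open>F (a, b) = 0\<close> cis_turn
    by (intro frame_change_triangle_eq_id) (simp_all add: F_def)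
  \<comment> \<open>The other two orders are cyclic rotations of this product, hence conjugate to it.\<close>
  have ACB: "A a \<circ> C b \<circ> B a b = id"
    using comp_eq_id_swap[OF inj_frame_change, of ?u a b] BAC by (simp add: A_def B_def C_def o_assoc)
  have CBA: "C b \<circ> B a b \<circ> A a = id"
    using comp_eq_id_swap[OF inj_frame_change, of ?u 0 a] ACB by (simp add: A_def B_def C_def o_assoc)
  from ab BAC ACB CBA show thesis
    by (rule that)
qed

lemma exists_closed_rcurve_if_noncyclic:
  assumes \<sigma>: "\<sigma> permutes {1..k}" and "k \<ge> 4"
    and ut: "\<forall>s\<in>{0..1}. utan \<gamma> s = cis (\<theta> s)"
    and cont\<gamma>: "continuous_on {0..1} \<gamma>" and cont\<theta>: "continuous_on {0..1} \<theta>"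
    and "\<theta> 1 \<noteq> \<theta> 0" and cis_turn: "cis (\<theta> 1) = cis (\<theta> 0)"
    and js: "1 \<le> j1" "j1 < j2" "j2 < j3" "j3 \<le> k"
    and noncyclic: "\<not> cyclically_ordered (\<sigma> j1) (\<sigma> j2) (\<sigma> j3)"
  shows "\<exists>C\<in>Dk_boundary k. closed_C1 (rcurve \<gamma> k \<sigma> C)"
proof -
  define A where "A a = frame_change \<gamma> (\<lambda>s. cis (\<theta> s)) 0 a" for a
  define B where "B a b = frame_change \<gamma> (\<lambda>s. cis (\<theta> s)) a b" for a b
  define C where "C b = frame_change \<gamma> (\<lambda>s. cis (\<theta> s)) b 1" for b
  obtain a b where ab: "0 \<le> a" "a \<le> b" "b \<le> 1" and BAC: "B a b \<circ> A a \<circ> C b = id"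
    and ACB: "A a \<circ> C b \<circ> B a b = id" and CBA: "C b \<circ> B a b \<circ> A a = id"
    using noncyclic_closing_cuts[OF cont\<gamma> cont\<theta> \<open>\<theta> 1 \<noteq> \<theta> 0\<close> cis_turn] unfolding A_def B_def C_def
    by blast
  obtain X Y Z where XYZ: "\<sigma> j1 = X" "\<sigma> j2 = Y" "\<sigma> j3 = Z"
    by blast
  have "j1 \<in> {1..k}" "j2 \<in> {1..k}" "j3 \<in> {1..k}"
    using js by auto
  then have range: "X \<in> {1..k}" "Y \<in> {1..k}" "Z \<in> {1..k}"
    unfolding XYZ[symmetric] by (simp_all only: permutes_in_image[OF \<sigma>])
  have distinct: "X \<noteq> Y" "Y \<noteq> Z" "X \<noteq> Z"
    using js unfolding XYZ[symmetric] inj_eq[OF permutes_inj[OF \<sigma>]] by auto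
  consider "Y < X" "X < Z" | "X < Z" "Z < Y" | "Z < Y" "Y < X"
    using noncyclic distinct unfolding XYZ cyclically_ordered_def by linarith
  then show ?thesis
  proof cases
    case 1
    have "{\<sigma> j1, \<sigma> j2, \<sigma> j3} = {Y, X, Z}"
      using XYZ by auto
    with 1 range distinct BAC show ?thesis
      by (intro exists_closed_rcurve_three_arcs[OF \<sigma> \<open>k \<ge> 4\<close> ut _ _ _ _ _ ab js])
        (auto simp: XYZ A_def B_def C_def)
  next
    case 2
    have "{\<sigma> j1, \<sigma> j2, \<sigma> j3} = {X, Z, Y}"
      using XYZ by auto
    with 2 range distinct ACB show ?thesis
      by (intro exists_closed_rcurve_three_arcs[OF \<sigma> \<open>k \<ge> 4\<close> ut _ _ _ _ _ ab js])
        (auto simp: XYZ A_def B_def C_def)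
  next
    case 3
    have "{\<sigma> j1, \<sigma> j2, \<sigma> j3} = {Z, Y, X}"
      using XYZ by auto
    with 3 range distinct CBA show ?thesis
      by (intro exists_closed_rcurve_three_arcs[OF \<sigma> \<open>k \<ge> 4\<close> ut _ _ _ _ _ ab js])
        (auto simp: XYZ A_def B_def C_def)
  qed
qed

theorem proposition4p6:
  fixes \<gamma> \<gamma>' :: "real \<Rightarrow> complex" and \<theta> :: "real \<Rightarrow> real" and c :: real
    and m :: int and k :: nat and \<sigma> :: "nat \<Rightarrow> nat"
  assumes deriv: "\<forall>s\<in>{0..1}. (\<gamma> has_vector_derivative \<gamma>' s) (at s within {0..1})"
    and cont_deriv: "continuous_on {0..1} \<gamma>'"
    and c_pos: "c > 0"
    and speed: "\<forall>s\<in>{0..1}. norm (\<gamma>' s) = c"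
    and not_closed: "\<gamma> 0 \<noteq> \<gamma> 1"
    and theta_cont: "continuous_on {0..1} \<theta>"
    and theta_turn: "\<forall>s\<in>{0..1}. \<gamma>' s = complex_of_real c * cis (\<theta> s)"
    and theta_total: "\<theta> 1 - \<theta> 0 = 2 * pi * of_int m"
    and m_nz: "m \<noteq> 0"
    and k_ge: "k \<ge> 4"
    and sigma: "\<sigma> permutes {1..k}"
  shows "(\<exists>C \<in> Dk_boundary k. closed_C1 (rcurve \<gamma> k \<sigma> C)) \<longleftrightarrow> \<sigma> \<notin> Zk k"
proof -
  have "k \<ge> 1"
    using k_ge by simp
  have ut: "\<forall>s\<in>{0..1}. utan \<gamma> s = cis (\<theta> s)"
    using utan_eq_cis[OF deriv c_pos theta_turn] .
  have cis_turn: "cis (\<theta> 1) = cis (\<theta> 0)"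
    using theta_total by (rule cis_eq_if_diff_multiple_2pi)
  have "\<theta> 1 \<noteq> \<theta> 0"
  proof
    assume "\<theta> 1 = \<theta> 0"
    with theta_total m_nz show False by simp
  qed
  have "continuous_on {0..1} \<gamma>"
    using deriv has_vector_derivative_continuous continuous_on_eq_continuous_within by blast
  show ?thesis
  proof
    assume "\<exists>C \<in> Dk_boundary k. closed_C1 (rcurve \<gamma> k \<sigma> C)"
    then obtain C where "C \<in> Dk k" "closed_C1 (rcurve \<gamma> k \<sigma> C)"
      using Dk_boundary_subset[OF \<open>k \<ge> 1\<close>] by blast
    then show "\<sigma> \<notin> Zk k"
      using rcurve_not_closed_if_Zk[OF _ _ ut _ cis_turn not_closed] by auto
  next
    assume "\<sigma> \<notin> Zk k"
    then have "\<not> cyclic_order_preserving \<sigma> k"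
      using cyclic_order_preserving_imp_Zk[OF sigma \<open>k \<ge> 1\<close>] by blast
    then obtain j1 j2 j3 where "1 \<le> j1" "j1 < j2" "j2 < j3" "j3 \<le> k"
      and "\<not> cyclically_ordered (\<sigma> j1) (\<sigma> j2) (\<sigma> j3)"
      unfolding cyclic_order_preserving_def by blast
    with exists_closed_rcurve_if_noncyclic[OF sigma k_ge ut \<open>continuous_on {0..1} \<gamma>\<close> theta_cont
        \<open>\<theta> 1 \<noteq> \<theta> 0\<close> cis_turn]
    show "\<exists>C \<in> Dk_boundary k. closed_C1 (rcurve \<gamma> k \<sigma> C)" .
  qed
qed

end
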